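(* Let $F=F(N,\mathcal D)$ be a connected GSC, $x\in F$, $n\ge1$, and let $\omega,\tau\in\mathcal D^n\setminus\Omega_n(x)$ be well separated by $x$. Then $\varphi_\omega(F)$ and $\varphi_\tau(F)$ lie in different connected components of $F\setminus\{x\}$; in particular $x$ is a cut point of $F$.
   Context: GSC: $N\ge2$, $\mathcal D\subset\{0,\dots,N-1\}^2$ with $1<|\mathcal D|<N^2$, $\varphi_i(x)=\frac1N(x+i)$, $F$ the attractor $F=\bigcup_{i\in\mathcal D}\varphi_i(F)$; $\varphi_{i_1\cdots i_k}=\varphi_{i_1}\circ\cdots\circ\varphi_{i_k}$. For $x\in F$ and $k\ge1$: $\Omega_k(x)=\{\mathbf i\in\mathcal D^k: x\in\varphi_{\mathbf i}(F)\}$ and $E_k(x)=\bigcup_{\mathbf j\in\mathcal D^k\setminus\Omega_k(x)}\varphi_{\mathbf j}(F)$. Two words $\omega,\tau\in\mathcal D^n\setminus\Omega_n(x)$ are well separated by $x$ if for every $p\ge1$ the sets $\varphi_\omega(F)$ and $\varphi_\tau(F)$ lie in different connected components of $E_{n+p}(x)$. *)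

theory Defs
  imports "HOL-Analysis.Analysis"
begin

type_synonym pt = "real \<times> real"

definition gsc_data :: "nat \<Rightarrow> (nat \<times> nat) set \<Rightarrow> bool" where
  "gsc_data N D \<longleftrightarrow> N \<ge> 2 \<and> D \<subseteq> {0..<N} \<times> {0..<N} \<and> 1 < card D \<and> card D < N^2"

definition phi :: "nat \<Rightarrow> nat \<times> nat \<Rightarrow> pt \<Rightarrow> pt" where
  "phi N i p = ((fst p + real (fst i)) / real N, (snd p + real (snd i)) / real N)"

definition phiw :: "nat \<Rightarrow> (nat \<times> nat) list \<Rightarrow> pt \<Rightarrow> pt" where
  "phiw N w = foldr (\<lambda>i f. phi N i \<circ> f) w id"

definition attractor :: "nat \<Rightarrow> (nat \<times> nat) set \<Rightarrow> pt set" where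
  "attractor N D = (THE F. F \<noteq> {} \<and> compact F \<and> F = (\<Union>i\<in>D. phi N i ` F))"

definition words :: "(nat \<times> nat) set \<Rightarrow> nat \<Rightarrow> (nat \<times> nat) list set" where
  "words D k = {w. length w = k \<and> set w \<subseteq> D}"

definition Omega :: "nat \<Rightarrow> (nat \<times> nat) set \<Rightarrow> nat \<Rightarrow> pt \<Rightarrow> (nat \<times> nat) list set" where
  "Omega N D k x = {w \<in> words D k. x \<in> phiw N w ` attractor N D}"

definition Ek :: "nat \<Rightarrow> (nat \<times> nat) set \<Rightarrow> nat \<Rightarrow> pt \<Rightarrow> pt set" where
  "Ek N D k x = (\<Union>w \<in> words D k - Omega N D k x. phiw N w ` attractor N D)"

definition diff_components :: "pt set \<Rightarrow> pt set \<Rightarrow> pt set \<Rightarrow> bool" where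
  "diff_components S A B \<longleftrightarrow> A \<subseteq> S \<and> B \<subseteq> S \<and>
     (\<forall>a\<in>A. \<forall>b\<in>B. connected_component_set S a \<noteq> connected_component_set S b)"

definition well_separated :: "nat \<Rightarrow> (nat \<times> nat) set \<Rightarrow> nat \<Rightarrow> pt \<Rightarrow>
    (nat \<times> nat) list \<Rightarrow> (nat \<times> nat) list \<Rightarrow> bool" where
  "well_separated N D n x \<omega> \<tau> \<longleftrightarrow>
     \<omega> \<in> words D n - Omega N D n x \<and> \<tau> \<in> words D n - Omega N D n x \<and>
     (\<forall>p\<ge>1. diff_components (Ek N D (n + p) x)
              (phiw N \<omega> ` attractor N D) (phiw N \<tau> ` attractor N D))"

definition cut_point :: "pt set \<Rightarrow> pt \<Rightarrow> bool" where
  "cut_point F x \<longleftrightarrow> x \<in> F \<and> \<not> connected (F - {x})"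

end

theory Submission
  imports Defs
begin

text \<open>The sets \<open>E\<^sub>k(x)\<close> increase with \<open>k\<close>. Given \<open>y \<noteq> x\<close> in \<open>F\<close>, take \<open>k\<close> so large that
  level-\<open>k\<close> cells are shorter than \<open>dist y x\<close>: the cells through \<open>y\<close> then miss \<open>x\<close>, cover a
  neighbourhood of \<open>y\<close> in \<open>F\<close>, and are connected because \<open>F\<close> is, so they join \<open>y\<close> to all nearby
  points inside \<open>E\<^sub>k(x)\<close>. Hence ``\<open>a\<close> and \<open>b\<close> lie in a common component of some \<open>E\<^sub>k(x)\<close>'' is an
  equivalence relation on \<open>F - {x}\<close> with open classes, and so it holds throughout every
  connected subset of \<open>F - {x}\<close>. Well separated cells therefore lie in different components.\<close>

lemma phi_eq_scaleR: "phi N i p = (1 / real N) *\<^sub>R (p + (real (fst i), real (snd i)))"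
  by (cases p) (simp add: phi_def divide_inverse mult.commute)

lemma dist_phi:
  assumes "N > 0"
  shows "dist (phi N i p) (phi N i q) = dist p q / real N"
proof -
  have "phi N i p - phi N i q = (1 / real N) *\<^sub>R (p - q)"
    unfolding phi_eq_scaleR by (simp add: algebra_simps)
  then show ?thesis by (simp add: dist_norm divide_inverse mult.commute)
qed

lemma continuous_on_phi: "continuous_on S (phi N i)"
  unfolding phi_eq_scaleR by (intro continuous_intros)

lemma phiw_Nil [simp]: "phiw N [] = id"
  by (simp add: phiw_def)

lemma phiw_Cons [simp]: "phiw N (i # w) = phi N i \<circ> phiw N w"
  by (simp add: phiw_def)

lemma phiw_append: "phiw N (w @ v) = phiw N w \<circ> phiw N v"
  by (induction w) auto

lemma dist_phiw: "N > 0 \<Longrightarrow> dist (phiw N w p) (phiw N w q) = dist p q / real N ^ length w"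
  by (induction w) (auto simp: dist_phi)

lemma continuous_on_phiw: "continuous_on S (phiw N w)"
proof (induction w arbitrary: S)
  case (Cons i w)
  then show ?case
    unfolding phiw_Cons by (rule continuous_on_compose[OF _ continuous_on_phi])
qed simp

lemma words_0: "words D 0 = {[]}"
  unfolding words_def by auto

lemma words_Suc: "words D (Suc k) = {i # w | i w. i \<in> D \<and> w \<in> words D k}"
  unfolding words_def by (auto simp: length_Suc_conv)

lemma words_append: "w \<in> words D k \<Longrightarrow> v \<in> words D l \<Longrightarrow> w @ v \<in> words D (k + l)"
  unfolding words_def by auto

lemma finite_words: "finite D \<Longrightarrow> finite (words D k)"
  unfolding words_def
  by (rule finite_subset[OF _ finite_lists_length_eq[of D k]]) auto

lemma self_similar_cells:
  assumes inv: "F = (\<Union>i\<in>D. phi N i ` F)"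
  shows "F = (\<Union>w\<in>words D k. phiw N w ` F)"
proof (induction k)
  case (Suc k)
  have "(\<Union>w\<in>words D (Suc k). phiw N w ` F) = (\<Union>i\<in>D. phi N i ` (\<Union>w\<in>words D k. phiw N w ` F))"
    unfolding words_Suc image_UN image_image by fastforce
  then show ?case
    using Suc inv by simp
qed (simp add: words_0)

lemma cell_subset:
  assumes "F = (\<Union>i\<in>D. phi N i ` F)" and "w \<in> words D k"
  shows "phiw N w ` F \<subseteq> F"
  using self_similar_cells[OF assms(1), of k] assms(2) by blast

lemma cell_split:
  assumes "F = (\<Union>i\<in>D. phi N i ` F)"
  shows "phiw N w ` F = (\<Union>v\<in>words D l. phiw N (w @ v) ` F)"
  by (subst self_similar_cells[OF assms, of l]) (auto simp: phiw_append)

lemma cells_eventually_small: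
  assumes "N \<ge> 2" "bounded F" "d > 0"
  obtains K where "\<And>w p q. K \<le> length w \<Longrightarrow> p \<in> F \<Longrightarrow> q \<in> F \<Longrightarrow>
                     dist (phiw N w p) (phiw N w q) < d"
proof -
  obtain K where K: "diameter F / d < real N ^ K"
    using real_arch_pow[of "real N"] assms(1) by auto
  have pos: "real N ^ K > 0"
    using assms(1) by simp
  have "dist (phiw N w p) (phiw N w q) < d"
    if "K \<le> length w" "p \<in> F" "q \<in> F" for w p q
  proof -
    have "dist (phiw N w p) (phiw N w q) = dist p q / real N ^ length w"
      using assms(1) by (simp add: dist_phiw)
    also have "\<dots> \<le> diameter F / real N ^ length w"
      using that assms(1,2) by (intro divide_right_mono diameter_bounded_bound) auto
    also have "\<dots> \<le> diameter F / real N ^ K"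
      using that assms(1) pos
      by (intro divide_left_mono diameter_ge_0 assms(2) power_increasing mult_pos_pos) auto
    also have "\<dots> < d"
      using K pos assms(3) by (simp add: divide_less_eq mult.commute)
    finally show ?thesis .
  qed
  then show ?thesis
    using that by blast
qed

lemma self_similar_subset:
  assumes N: "N \<ge> 2"
    and G: "bounded G" "G = (\<Union>i\<in>D. phi N i ` G)"
    and H: "H \<noteq> {}" "compact H" "H = (\<Union>i\<in>D. phi N i ` H)"
  shows "G \<subseteq> H"
proof
  fix y assume "y \<in> G"
  obtain h where h: "h \<in> H"
    using H(1) by blast
  have "y \<in> closure H"
    unfolding closure_approachable
  proof (intro allI impI)
    fix e :: real assume "e > 0"
    have "bounded (G \<union> H)"
      using G(1) H(2) by (simp add: compact_imp_bounded)
    then obtain K where K: "\<And>w p q. K \<le> length w \<Longrightarrow> p \<in> G \<union> H \<Longrightarrow> q \<in> G \<union> H \<Longrightarrow>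
                                     dist (phiw N w p) (phiw N w q) < e"
      using cells_eventually_small[OF N _ \<open>e > 0\<close>] by blast
    obtain w g where w: "w \<in> words D K" "g \<in> G" "y = phiw N w g"
      using self_similar_cells[OF G(2), of K] \<open>y \<in> G\<close> by blast
    have "phiw N w h \<in> H"
      using cell_subset[OF H(3) w(1)] h by blast
    moreover have "dist (phiw N w h) y < e"
      using K[of w h g] w h by (simp add: words_def)
    ultimately show "\<exists>y'\<in>H. dist y' y < e" by blast
  qed
  then show "y \<in> H"
    using H(2) by (simp add: compact_imp_closed)
qed

lemma closure_self_similar:
  assumes "finite D" "bounded P" "P = (\<Union>i\<in>D. phi N i ` P)"
  shows "closure P = (\<Union>i\<in>D. phi N i ` closure P)"
proof
  have "compact (\<Union>i\<in>D. phi N i ` closure P)"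
    using assms(1,2) by (intro compact_UN compact_continuous_image continuous_on_phi) (auto simp: compact_closure)
  moreover have "P \<subseteq> (\<Union>i\<in>D. phi N i ` closure P)"
    using assms(3) closure_subset by blast
  ultimately show "closure P \<subseteq> (\<Union>i\<in>D. phi N i ` closure P)"
    by (simp add: closure_minimal compact_imp_closed)
next
  have "phi N i ` closure P \<subseteq> closure P" if "i \<in> D" for i
    using that assms(3) closure_subset
    by (intro image_closure_subset continuous_on_phi closed_closure) blast
  then show "(\<Union>i\<in>D. phi N i ` closure P) \<subseteq> closure P" by blast
qed

lemma phi_unit_square:
  assumes "N \<ge> 2" "i \<in> {0..<N} \<times> {0..<N}" "p \<in> {0..1} \<times> {0..1::real}"
  shows "phi N i p \<in> {0..1} \<times> {0..1}"
proof -
  have "real (fst i) \<le> real N - 1" "real (snd i) \<le> real N - 1"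
    using assms(2) by (auto simp: of_nat_diff[symmetric])
  with assms show ?thesis
    by (cases p) (auto simp: phi_def field_simps)
qed

lemma orbit_self_similar:
  assumes "(a, b) \<in> D" "phi N (a, b) z = z"
  shows "{phiw N w z | w. set w \<subseteq> D} = (\<Union>i\<in>D. phi N i ` {phiw N w z | w. set w \<subseteq> D})"
    (is "?P = _")
proof
  have orbit_mem: "phiw N w z \<in> ?P" if "set w \<subseteq> D" for w
    using that by blast
  show "?P \<subseteq> (\<Union>i\<in>D. phi N i ` ?P)"
  proof
    fix y assume "y \<in> ?P"
    then obtain w where w: "set w \<subseteq> D" "y = phiw N w z"
      by blast
    show "y \<in> (\<Union>i\<in>D. phi N i ` ?P)"
    proof (cases w)
      case Nil
      then have "y = phi N (a, b) (phiw N [] z)"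
        using w assms(2) by simp
      moreover have "phiw N [] z \<in> ?P"
        by (rule orbit_mem) simp
      ultimately show ?thesis
        using assms(1) by blast
    next
      case (Cons i v)
      then have "y = phi N i (phiw N v z)" "i \<in> D" "phiw N v z \<in> ?P"
        using w orbit_mem[of v] by simp_all
      then show ?thesis
        by blast
    qed
  qed
  show "(\<Union>i\<in>D. phi N i ` ?P) \<subseteq> ?P"
  proof
    fix y assume "y \<in> (\<Union>i\<in>D. phi N i ` ?P)"
    then obtain i w where "i \<in> D" "set w \<subseteq> D" "y = phi N i (phiw N w z)"
      by blast
    then have "set (i # w) \<subseteq> D" "y = phiw N (i # w) z"
      by simp_all
    then show "y \<in> ?P"
      by blast
  qed
qed

text \<open>The closure of the orbit of the fixed point of some \<open>\<phi>\<^sub>i\<close> is the attractor.\<close>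
lemma self_similar_set_exists:
  assumes "gsc_data N D"
  shows "\<exists>F. F \<noteq> {} \<and> compact F \<and> F = (\<Union>i\<in>D. phi N i ` F)"
proof -
  have N: "N \<ge> 2" and Dsub: "D \<subseteq> {0..<N} \<times> {0..<N}" and cD: "1 < card D"
    using assms by (auto simp: gsc_data_def)
  obtain i0 where "i0 \<in> D"
    using cD by (metis card.empty ex_in_conv not_one_less_zero)
  then obtain a b where i0: "(a, b) \<in> D"
    by (cases i0) blast
  define z where "z = (real a / (real N - 1), real b / (real N - 1))"
  have "real N - 1 > 0"
    using N by simp
  then have fix_z: "phi N (a, b) z = z"
    unfolding z_def phi_def by (auto simp: field_simps)
  have "real a \<le> real N - 1" "real b \<le> real N - 1"
    using Dsub i0 by (auto simp: of_nat_diff[symmetric])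
  with \<open>real N - 1 > 0\<close> have z_square: "z \<in> {0..1} \<times> {0..1}"
    unfolding z_def by (auto simp: field_simps)
  define P where "P = {phiw N w z | w. set w \<subseteq> D}"
  have "phiw N w z \<in> {0..1} \<times> {0..1}" if "set w \<subseteq> D" for w
    using that by (induction w) (use z_square phi_unit_square[OF N] Dsub in auto)
  then have "P \<subseteq> {0..1} \<times> {0..1}"
    unfolding P_def by blast
  then have "bounded P"
    by (rule bounded_subset[OF bounded_Times[OF bounded_closed_interval bounded_closed_interval]])
  moreover have "finite D"
    using cD by (intro card_ge_0_finite) simp
  ultimately have "closure P = (\<Union>i\<in>D. phi N i ` closure P)"
    using closure_self_similar orbit_self_similar[OF i0 fix_z] unfolding P_def by blast
  moreover have "compact (closure P)"
    using \<open>bounded P\<close> by (simp add: compact_closure)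
  moreover have "z \<in> P"
    unfolding P_def by (auto intro!: exI[of _ "[]"])
  then have "closure P \<noteq> {}"
    using closure_subset by blast
  ultimately show ?thesis
    by blast
qed

lemma
  assumes "gsc_data N D"
  shows attractor_nonempty: "attractor N D \<noteq> {}"
    and compact_attractor: "compact (attractor N D)"
    and attractor_self_similar: "attractor N D = (\<Union>i\<in>D. phi N i ` attractor N D)"
proof -
  have N: "N \<ge> 2"
    using assms by (simp add: gsc_data_def)
  have "\<exists>!F. F \<noteq> {} \<and> compact F \<and> F = (\<Union>i\<in>D. phi N i ` F)"
  proof (rule ex_ex1I)
    show "\<exists>F. F \<noteq> {} \<and> compact F \<and> F = (\<Union>i\<in>D. phi N i ` F)"
      by (rule self_similar_set_exists[OF assms])
    fix G H
    assume "G \<noteq> {} \<and> compact G \<and> G = (\<Union>i\<in>D. phi N i ` G)"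
      and "H \<noteq> {} \<and> compact H \<and> H = (\<Union>i\<in>D. phi N i ` H)"
    then show "G = H"
      using self_similar_subset[OF N] compact_imp_bounded by (meson subset_antisym)
  qed
  then have "attractor N D \<noteq> {} \<and> compact (attractor N D) \<and>
             attractor N D = (\<Union>i\<in>D. phi N i ` attractor N D)"
    unfolding attractor_def by (rule theI')
  then show "attractor N D \<noteq> {}" "compact (attractor N D)"
    "attractor N D = (\<Union>i\<in>D. phi N i ` attractor N D)"
    by blast+
qed

lemma incseq_Ek:
  assumes "attractor N D = (\<Union>i\<in>D. phi N i ` attractor N D)"
  shows "incseq (\<lambda>k. Ek N D k x)"
proof (rule incseq_SucI, rule subsetI)
  let ?F = "attractor N D"
  fix k y assume "y \<in> Ek N D k x"
  then obtain w where w: "w \<in> words D k" "x \<notin> phiw N w ` ?F" "y \<in> phiw N w ` ?F"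
    unfolding Ek_def Omega_def by blast
  then obtain v where v: "v \<in> words D 1" "y \<in> phiw N (w @ v) ` ?F"
    using cell_split[OF assms, of w 1] by blast
  have "phiw N (w @ v) ` ?F \<subseteq> phiw N w ` ?F"
    using cell_split[OF assms, of w 1] v(1) by blast
  moreover have "w @ v \<in> words D (Suc k)"
    using words_append[OF w(1) v(1)] by simp
  ultimately show "y \<in> Ek N D (Suc k) x"
    using w v unfolding Ek_def Omega_def by blast
qed

lemma connected_component_imp_connected_component_incseq:
  fixes E :: "nat \<Rightarrow> 'a::metric_space set"
  assumes "incseq E"
    and near: "\<And>y. y \<in> S \<Longrightarrow>
      \<exists>k \<delta>. \<delta> > 0 \<and> (\<forall>z\<in>S. dist y z < \<delta> \<longrightarrow> connected_component (E k) y z)"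
    and "connected_component S a b"
  shows "\<exists>k. connected_component (E k) a b"
proof -
  obtain T where T: "connected T" "T \<subseteq> S" "a \<in> T" "b \<in> T"
    using assms(3) unfolding connected_component_def by blast
  have mono: "connected_component (E l) y z" if "connected_component (E k) y z" "k \<le> l" for k l y z
    using that connected_component_of_subset incseqD[OF assms(1)] by metis
  show ?thesis
  proof (rule connected_equivalence_relation[OF T(1,3,4)])
    fix y z assume "\<exists>k. connected_component (E k) y z"
    then show "\<exists>k. connected_component (E k) z y"
      using connected_component_sym by blast
  next
    fix y z u assume "\<exists>k. connected_component (E k) y z" "\<exists>k. connected_component (E k) z u"
    then obtain k l where "connected_component (E k) y z" "connected_component (E l) z u"
      by blast
    then have "connected_component (E (max k l)) y u"
      using mono connected_component_trans by (meson max.cobounded1 max.cobounded2)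
    then show "\<exists>k. connected_component (E k) y u" ..
  next
    fix y assume "y \<in> T"
    then obtain k \<delta> where "\<delta> > 0" "\<forall>z\<in>S. dist y z < \<delta> \<longrightarrow> connected_component (E k) y z"
      using near T(2) by blast
    then show "\<exists>U. openin (top_of_set T) U \<and> y \<in> U \<and> (\<forall>z\<in>U. \<exists>k. connected_component (E k) y z)"
      using T(2) \<open>y \<in> T\<close> by (intro exI[of _ "T \<inter> ball y \<delta>"]) auto
  qed
qed

lemma near_points_share_cell:
  assumes "finite D" "compact F" "F = (\<Union>i\<in>D. phi N i ` F)"
  obtains \<delta> where "\<delta> > 0"
    "\<And>z. z \<in> F \<Longrightarrow> dist y z < \<delta> \<Longrightarrow> \<exists>w\<in>words D k. y \<in> phiw N w ` F \<and> z \<in> phiw N w ` F"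
proof -
  define T where "T = (\<Union>w\<in>{w \<in> words D k. y \<notin> phiw N w ` F}. phiw N w ` F)"
  have "compact T"
    unfolding T_def using finite_words[OF assms(1), of k] assms(2)
    by (intro compact_UN compact_continuous_image continuous_on_phiw) auto
  then have "open (- T)"
    by (simp add: compact_imp_closed open_Compl)
  moreover have "y \<in> - T"
    unfolding T_def by blast
  ultimately obtain \<delta> where "\<delta> > 0" "ball y \<delta> \<subseteq> - T"
    by (meson open_contains_ball_eq)
  moreover have "\<exists>w\<in>words D k. y \<in> phiw N w ` F \<and> z \<in> phiw N w ` F"
    if "z \<in> F" "dist y z < \<delta>" for z
  proof -
    have "z \<in> (\<Union>w\<in>words D k. phiw N w ` F)"
      using self_similar_cells[OF assms(3), of k] that(1) by (rule subst)
    then obtain w where "w \<in> words D k" "z \<in> phiw N w ` F"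
      by blast
    moreover have "z \<notin> T"
      using that(2) \<open>ball y \<delta> \<subseteq> - T\<close> by (auto simp: dist_commute)
    ultimately show ?thesis
      unfolding T_def by blast
  qed
  ultimately show ?thesis
    using that by blast
qed

lemma Ek_locally_connects:
  assumes gsc: "gsc_data N D" and conn: "connected (attractor N D)"
    and "y \<in> attractor N D - {x}"
  shows "\<exists>k \<delta>. \<delta> > 0 \<and> (\<forall>z\<in>attractor N D - {x}. dist y z < \<delta> \<longrightarrow>
           connected_component (Ek N D k x) y z)"
proof -
  let ?F = "attractor N D"
  have N: "N \<ge> 2" and "finite D"
    using gsc by (auto simp: gsc_data_def intro: card_ge_0_finite)
  have "dist y x > 0"
    using assms(3) by simp
  then obtain K where K: "\<And>w p q. K \<le> length w \<Longrightarrow> p \<in> ?F \<Longrightarrow> q \<in> ?F \<Longrightarrow>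
                               dist (phiw N w p) (phiw N w q) < dist y x"
    using cells_eventually_small[OF N compact_imp_bounded[OF compact_attractor[OF gsc]]] by blast
  obtain \<delta> where \<delta>: "\<delta> > 0" "\<And>z. z \<in> ?F \<Longrightarrow> dist y z < \<delta> \<Longrightarrow>
                       \<exists>w\<in>words D K. y \<in> phiw N w ` ?F \<and> z \<in> phiw N w ` ?F"
    using near_points_share_cell[OF \<open>finite D\<close> compact_attractor[OF gsc]
        attractor_self_similar[OF gsc]] by blast
  have "connected_component (Ek N D K x) y z" if z: "z \<in> ?F" "dist y z < \<delta>" for z
  proof -
    obtain w where w: "w \<in> words D K" "y \<in> phiw N w ` ?F" "z \<in> phiw N w ` ?F"
      using \<delta>(2)[OF z] by blast
    have "x \<notin> phiw N w ` ?F"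
    proof
      assume "x \<in> phiw N w ` ?F"
      then obtain p where "p \<in> ?F" "x = phiw N w p"
        by blast
      moreover obtain q where "q \<in> ?F" "y = phiw N w q"
        using w(2) by blast
      ultimately have "dist y x < dist y x"
        using K[of w q p] w(1) by (simp add: words_def)
      then show False by simp
    qed
    then have "phiw N w ` ?F \<subseteq> Ek N D K x"
      using w(1) unfolding Ek_def Omega_def by blast
    moreover have "connected (phiw N w ` ?F)"
      using conn by (intro connected_continuous_image continuous_on_phiw)
    ultimately show ?thesis
      using w unfolding connected_component_def by blast
  qed
  then show ?thesis
    using \<delta>(1) by blast
qed

lemma well_separated_imp_diff_components:
  assumes gsc: "gsc_data N D" and conn: "connected (attractor N D)"
    and sep: "well_separated N D n x \<omega> \<tau>"
  shows "diff_components (attractor N D - {x}) (phiw N \<omega> ` attractor N D) (phiw N \<tau> ` attractor N D)"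
proof -
  let ?F = "attractor N D" and ?S = "attractor N D - {x}"
  note inv = attractor_self_similar[OF gsc]
  have sep_levels: "diff_components (Ek N D (n + p) x) (phiw N \<omega> ` ?F) (phiw N \<tau> ` ?F)"
    if "p \<ge> 1" for p
    using sep that unfolding well_separated_def by blast
  have cells: "phiw N \<omega> ` ?F \<subseteq> ?S" "phiw N \<tau> ` ?F \<subseteq> ?S"
    using sep cell_subset[OF inv] unfolding well_separated_def Omega_def by blast+
  have "connected_component_set ?S a \<noteq> connected_component_set ?S b"
    if a: "a \<in> phiw N \<omega> ` ?F" and b: "b \<in> phiw N \<tau> ` ?F" for a b
  proof
    assume "connected_component_set ?S a = connected_component_set ?S b"
    then have "connected_component ?S a b"
      using a b cells by (auto simp: connected_component_eq_eq)
    then obtain k where "connected_component (Ek N D k x) a b"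
      using connected_component_imp_connected_component_incseq[OF incseq_Ek[OF inv]]
        Ek_locally_connects[OF gsc conn] by blast
    moreover have "Ek N D k x \<subseteq> Ek N D (n + (k + 1)) x"
      using incseqD[OF incseq_Ek[OF inv]] by simp
    ultimately have "connected_component (Ek N D (n + (k + 1)) x) a b"
      by (rule connected_component_of_subset)
    moreover have "diff_components (Ek N D (n + (k + 1)) x) (phiw N \<omega> ` ?F) (phiw N \<tau> ` ?F)"
      using sep_levels[of "k + 1"] by simp
    ultimately show False
      using a b connected_component_eq unfolding diff_components_def by blast
  qed
  with cells show ?thesis
    unfolding diff_components_def by blast
qed

theorem mainTheorem16:
  fixes N :: nat and D :: "(nat \<times> nat) set" and x :: pt and n :: nat
    and \<omega> \<tau> :: "(nat \<times> nat) list"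
  assumes "gsc_data N D"
    and "connected (attractor N D)"
    and "x \<in> attractor N D"
    and "n \<ge> 1"
    and "\<omega> \<in> words D n - Omega N D n x" and "\<tau> \<in> words D n - Omega N D n x"
    and "well_separated N D n x \<omega> \<tau>"
  shows "diff_components (attractor N D - {x})
           (phiw N \<omega> ` attractor N D) (phiw N \<tau> ` attractor N D)
         \<and> cut_point (attractor N D) x"
proof -
  have sep: "diff_components (attractor N D - {x})
               (phiw N \<omega> ` attractor N D) (phiw N \<tau> ` attractor N D)"
    using well_separated_imp_diff_components[OF assms(1,2,7)] .
  obtain a b where "a \<in> phiw N \<omega> ` attractor N D" "b \<in> phiw N \<tau> ` attractor N D"
    using attractor_nonempty[OF assms(1)] by blast
  with sep have "a \<in> attractor N D - {x}" "b \<in> attractor N D - {x}"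
    "connected_component_set (attractor N D - {x}) a \<noteq> connected_component_set (attractor N D - {x}) b"
    unfolding diff_components_def by blast+
  then have "\<not> connected (attractor N D - {x})"
    using connected_component_eq_self by blast
  with sep assms(3) show ?thesis
    unfolding cut_point_def by blast
qed

end
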